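(* Let $\mathcal{E}$ be a Euclidean space, $h:\mathcal{E}\to\mathbb{R}\cup\{+\infty\}$ a proper function, and $\mathcal{M}$ a compact embedded submanifold of $\mathcal{E}$ endowed with the induced Riemannian metric. If $h+\delta_{\mathcal{M}}$ is a KL function on $\mathcal{E}$, then the restriction $h_{|\mathcal{M}}$ is a KL function on $\mathcal{M}$; conversely, if $h_{|\mathcal{M}}$ is a KL function on $\mathcal{M}$, then $h+\delta_{\mathcal{M}}$ is a KL function on $\mathcal{E}$.
   Context: $\delta_{\mathcal{M}}$ is the indicator of $\mathcal{M}$ ($0$ on $\mathcal{M}$, $+\infty$ off it). On $\mathcal{E}$, $\partial$ denotes the limiting subdifferential of Rockafellar–Wets. On $\mathcal{M}$, for $g:\mathcal{M}\to\mathbb{R}\cup\{+\infty\}$: the Fréchet subdifferential $\widehat\partial g(x)$ (for $g(x)<\infty$) is the set of Riemannian gradients ${\rm grad}\,\theta(x)$ of functions $\theta$, $C^1$ on $\mathcal{M}$ near $x$, such that $g-\theta$ has a local minimum at $x$; the limiting subdifferential $\partial g(x)$ is the set of limits of $v^k\in\widehat\partial g(x^k)$ with $x^k\to x$, $g(x^k)\to g(x)$. A proper function $g$ (on $\mathcal{E}$ or on $\mathcal{M}$) has the KL property at $\overline{x}\in{\rm dom}\,\partial g$ if there exist $\eta\in(0,+\infty]$, a neighborhood $U$ of $\overline{x}$ and a continuous concave $\varphi:[0,\eta)\to\mathbb{R}_+$ with $\varphi(0)=0$, $\varphi$ $C^1$ on $(0,\eta)$, $\varphi'>0$ there, such that $\varphi'(g(x)-g(\overline{x}))\,{\rm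 dist}(0,\partial g(x))\ge1$ for all $x\in U$ with $g(\overline{x})<g(x)<g(\overline{x})+\eta$ (distance measured in the Euclidean norm, resp. the Riemannian norm); $g$ is a KL function if it has the KL property at every point of ${\rm dom}\,\partial g$. *)

theory Defs
  imports "HOL-Analysis.Analysis"
begin

fun Ck_on :: "nat \<Rightarrow> 'a::euclidean_space set \<Rightarrow> ('a \<Rightarrow> 'b::euclidean_space) \<Rightarrow> bool" where
  "Ck_on 0 U f = continuous_on U f"
| "Ck_on (Suc k) U f =
     ((\<forall>x\<in>U. f differentiable (at x)) \<and>
      (\<forall>e\<in>Basis. Ck_on k U (\<lambda>x. frechet_derivative f (at x) e)))"

definition smooth_on :: "'a::euclidean_space set \<Rightarrow> ('a \<Rightarrow> 'b::euclidean_space) \<Rightarrow> bool" where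
  "smooth_on U f \<longleftrightarrow> (\<forall>k. Ck_on k U f)"

definition embedded_submanifold :: "'a::euclidean_space set \<Rightarrow> bool" where
  "embedded_submanifold M \<longleftrightarrow>
     (\<exists>d. \<forall>x\<in>M. \<exists>U V (\<phi>::'a \<Rightarrow> 'a) \<psi> S.
        open U \<and> x \<in> U \<and> open V \<and> homeomorphism U V \<phi> \<psi> \<and>
        smooth_on U \<phi> \<and> smooth_on V \<psi> \<and>
        subspace S \<and> dim S = d \<and> \<phi> ` (M \<inter> U) = V \<inter> S)"

definition tangent_space :: "'a::euclidean_space set \<Rightarrow> 'a \<Rightarrow> 'a set" where
  "tangent_space M x =
     {v. \<exists>(\<gamma>::real \<Rightarrow> 'a) \<epsilon>. \<epsilon> > 0 \<and> \<gamma> 0 = x \<and> (\<forall>t\<in>{-\<epsilon><..<\<epsilon>}. \<gamma> t \<in> M) \<and>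
          \<gamma> C1_differentiable_on {-\<epsilon><..<\<epsilon>} \<and> vector_derivative \<gamma> (at 0) = v}"

definition frechet_subdiff :: "('a::euclidean_space \<Rightarrow> ereal) \<Rightarrow> 'a \<Rightarrow> 'a set" where
  "frechet_subdiff f x =
     {v. \<bar>f x\<bar> \<noteq> \<infinity> \<and>
         (\<forall>\<epsilon>>0. \<exists>\<delta>>0. \<forall>y. norm (y - x) < \<delta> \<longrightarrow>
            f y \<ge> ereal (real_of_ereal (f x) + inner v (y - x) - \<epsilon> * norm (y - x)))}"

definition limiting_subdiff :: "('a::euclidean_space \<Rightarrow> ereal) \<Rightarrow> 'a \<Rightarrow> 'a set" where
  "limiting_subdiff f x =
     {v. \<bar>f x\<bar> \<noteq> \<infinity> \<and>
         (\<exists>xs vs. xs \<longlonglongrightarrow> x \<and> (\<lambda>k. f (xs k)) \<longlonglongrightarrow> f x \<and>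
                  (\<forall>k. vs k \<in> frechet_subdiff f (xs k)) \<and> vs \<longlonglongrightarrow> v)}"

text \<open>Riemannian Frechet subdifferential of g (considered on M only) at x \<in> M, for the
  induced metric: Riemannian gradients grad theta(x) of functions theta that are C^1 on M near x
  (= restrictions of C^1 functions Theta on an open set U of E) such that g - theta has a
  local minimum at x (on M).  grad theta(x) is the unique tangent vector v with
  inner v w = D Theta(x) w for all tangent vectors w.\<close>
definition riem_frechet_subdiff :: "'a::euclidean_space set \<Rightarrow> ('a \<Rightarrow> ereal) \<Rightarrow> 'a \<Rightarrow> 'a set" where
  "riem_frechet_subdiff M g x =
     {v. x \<in> M \<and> \<bar>g x\<bar> \<noteq> \<infinity> \<and>
         (\<exists>U (\<Theta>::'a \<Rightarrow> real). open U \<and> x \<in> U \<and> Ck_on 1 U \<Theta> \<and>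
            (\<forall>y\<in>M \<inter> U. g y - ereal (\<Theta> y) \<ge> g x - ereal (\<Theta> x)) \<and>
            v \<in> tangent_space M x \<and>
            (\<forall>w\<in>tangent_space M x. inner v w = frechet_derivative \<Theta> (at x) w))}"

definition riem_limiting_subdiff :: "'a::euclidean_space set \<Rightarrow> ('a \<Rightarrow> ereal) \<Rightarrow> 'a \<Rightarrow> 'a set" where
  "riem_limiting_subdiff M g x =
     {v. x \<in> M \<and> \<bar>g x\<bar> \<noteq> \<infinity> \<and>
         (\<exists>xs vs. (\<forall>k. xs k \<in> M) \<and> xs \<longlonglongrightarrow> x \<and> (\<lambda>k. g (xs k)) \<longlonglongrightarrow> g x \<and>
                  (\<forall>k. vs k \<in> riem_frechet_subdiff M g (xs k)) \<and> vs \<longlonglongrightarrow> v)}"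

text \<open>Generic KL property of g on the domain D (D = UNIV for E, D = M for the manifold),
  w.r.t. the subdifferential sd.  dist(0, {}) = +\<infinity>, so the inequality is vacuous
  when sd x is empty.\<close>
definition KL_at :: "('a::euclidean_space \<Rightarrow> 'a set) \<Rightarrow> 'a set \<Rightarrow> ('a \<Rightarrow> ereal) \<Rightarrow> 'a \<Rightarrow> bool" where
  "KL_at sd D g xb \<longleftrightarrow>
     (\<exists>(\<eta>::ereal) U (\<phi>::real \<Rightarrow> real).
        \<eta> > 0 \<and> open U \<and> xb \<in> U \<and>
        continuous_on {s. 0 \<le> s \<and> ereal s < \<eta>} \<phi> \<and>
        concave_on {s. 0 \<le> s \<and> ereal s < \<eta>} \<phi> \<and>
        \<phi> 0 = 0 \<and> (\<forall>s. 0 \<le> s \<and> ereal s < \<eta> \<longrightarrow> \<phi> s \<ge> 0) \<and>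
        (\<forall>s. 0 < s \<and> ereal s < \<eta> \<longrightarrow> \<phi> differentiable (at s) \<and> deriv \<phi> s > 0) \<and>
        continuous_on {s. 0 < s \<and> ereal s < \<eta>} (deriv \<phi>) \<and>
        (\<forall>x\<in>U \<inter> D. g xb < g x \<and> g x < g xb + \<eta> \<longrightarrow> sd x \<noteq> {} \<longrightarrow>
            deriv \<phi> (real_of_ereal (g x - g xb)) * infdist 0 (sd x) \<ge> 1))"

definition proper_on :: "'a set \<Rightarrow> ('a \<Rightarrow> ereal) \<Rightarrow> bool" where
  "proper_on D g \<longleftrightarrow> (\<exists>x\<in>D. g x \<noteq> \<infinity>) \<and> (\<forall>x\<in>D. g x \<noteq> -\<infinity>)"

definition KL_function :: "('a::euclidean_space \<Rightarrow> 'a set) \<Rightarrow> 'a set \<Rightarrow> ('a \<Rightarrow> ereal) \<Rightarrow> bool" where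
  "KL_function sd D g \<longleftrightarrow> proper_on D g \<and> (\<forall>x\<in>D. sd x \<noteq> {} \<longrightarrow> KL_at sd D g x)"

abbreviation KL_function_E :: "('a::euclidean_space \<Rightarrow> ereal) \<Rightarrow> bool" where
  "KL_function_E g \<equiv> KL_function (limiting_subdiff g) UNIV g"

abbreviation KL_function_M :: "'a::euclidean_space set \<Rightarrow> ('a \<Rightarrow> ereal) \<Rightarrow> bool" where
  "KL_function_M M g \<equiv> KL_function (riem_limiting_subdiff M g) M g"

definition plus_indicator :: "('a \<Rightarrow> ereal) \<Rightarrow> 'a set \<Rightarrow> 'a \<Rightarrow> ereal" where
  "plus_indicator h M = (\<lambda>x. if x \<in> M then h x else \<infinity>)"

end

theory Submission
  imports Defs
begin

(*
  A Riemannian Frechet subgradient g of h|M at x is tangent, and M agrees with x + T_x M to first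
  order, so g is also a Euclidean Frechet subgradient of h + \<delta>_M.  Conversely, a Euclidean Frechet
  subgradient v is the gradient at x of a C^1 function lying below h + \<delta>_M near x (obtained by
  subtracting from the affine model a C^1 radial majorant of the o(|z - x|) defect), so its
  orthogonal projection onto T_x M is a Riemannian Frechet subgradient of norm at most |v|.
  Passing to limits (through a convergent subsequence of the bounded projections), the two limiting
  subdifferentials are nonempty at the same points and have the same distance to 0.  Hence every
  desingularizing function for one function serves for the other.
*)

section \<open>Smooth minorants of Frechet subgradients\<close>

lemma integrable_on_mono_on_atLeast:
  fixes w :: "real \<Rightarrow> real"
  assumes "mono_on {0..} w" "0 \<le> a"
  shows "w integrable_on {a..b}"
  by (rule integrable_on_mono_on, rule mono_on_subset[OF assms(1)]) (use assms(2) in auto)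

lemma doubling_average_bounds:
  fixes w :: "real \<Rightarrow> real"
  assumes mono: "mono_on {0..} w" and s: "0 < s"
  shows "w s \<le> integral {s..2 * s} w / s \<and> integral {s..2 * s} w / s \<le> w (2 * s)"
proof -
  have "integral {s..2 * s} (\<lambda>x. w s) \<le> integral {s..2 * s} w"
    by (rule integral_le) (use s integrable_on_mono_on_atLeast[OF mono, of s "2 * s"] in \<open>auto intro!: mono_onD[OF mono]\<close>)
  moreover have "integral {s..2 * s} w \<le> integral {s..2 * s} (\<lambda>x. w (2 * s))"
    by (rule integral_le) (use s integrable_on_mono_on_atLeast[OF mono, of s "2 * s"] in \<open>auto intro!: mono_onD[OF mono]\<close>)
  ultimately show ?thesis
    using s by (simp add: field_simps)
qed

lemma continuous_on_doubling_average:
  fixes w :: "real \<Rightarrow> real"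
  assumes mono: "mono_on {0..} w"
  shows "continuous_on {0<..} (\<lambda>s. integral {s..2 * s} w / s)"
proof -
  define A where "A r = integral {0..r} w" for r
  have A_cont: "isCont A x" if "0 < x" for x
  proof -
    have "continuous_on {0..x + 1} A"
      using indefinite_integral_continuous_1[OF integrable_on_mono_on_atLeast[OF mono, of 0]]
      by (simp add: A_def)
    then show ?thesis
      by (rule continuous_on_interior) (use that in auto)
  qed
  have cont: "continuous_on {0<..} (\<lambda>s. (A (2 * s) - A s) / s)"
  proof (rule continuous_at_imp_continuous_on, rule ballI)
    fix x :: real assume "x \<in> {0<..}"
    then have "isCont (\<lambda>s. A (2 * s)) x" "isCont A x" "x \<noteq> 0"
      using A_cont[of "2 * x"] A_cont[of x] by (auto intro!: isCont_o2[where f="\<lambda>s. 2 * s" and g=A])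
    then show "isCont (\<lambda>s. (A (2 * s) - A s) / s) x"
      by (auto intro!: isCont_divide isCont_diff)
  qed
  have eq: "A (2 * s) - A s = integral {s..2 * s} w" if "0 < s" for s
    using Henstock_Kurzweil_Integration.integral_combine[of 0 s "2 * s" w]
      integrable_on_mono_on_atLeast[OF mono, of 0 "2 * s"] that
    by (simp add: A_def)
  show ?thesis
    by (rule continuous_on_eq[OF cont]) (simp add: eq)
qed

lemma averaged_modulus_exists:
  fixes w :: "real \<Rightarrow> real"
  assumes mono: "mono_on {0..} w" and nonneg: "\<And>r. 0 \<le> r \<Longrightarrow> 0 \<le> w r"
    and lim0: "\<And>e. e > 0 \<Longrightarrow> \<exists>d>0. \<forall>r. 0 \<le> r \<and> r < d \<longrightarrow> w r \<le> e"
  shows "\<exists>\<eta>. continuous_on {0..} \<eta> \<and> \<eta> 0 = 0 \<and> (\<forall>s>0. w s \<le> \<eta> s \<and> \<eta> s \<le> w (2 * s))"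
proof -
  define \<eta> where "\<eta> s = (if s \<le> 0 then 0 else integral {s..2 * s} w / s)" for s
  have bounds: "w s \<le> \<eta> s \<and> \<eta> s \<le> w (2 * s)" if "0 < s" for s
    using doubling_average_bounds[OF mono that] that by (simp add: \<eta>_def)
  have "continuous_on {0<..} \<eta>"
    by (rule continuous_on_eq[OF continuous_on_doubling_average[OF mono]]) (simp add: \<eta>_def)
  then have "isCont \<eta> x" if "0 < x" for x
    using that by (simp add: continuous_on_interior interior_open)
  moreover have "continuous (at 0 within {0..}) \<eta>"
    unfolding continuous_within Lim_within
  proof (intro allI impI)
    fix e :: real assume "e > 0"
    then obtain d where d: "d > 0" "\<forall>r. 0 \<le> r \<and> r < d \<longrightarrow> w r \<le> e / 2"
      using lim0[of "e / 2"] by auto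
    have "dist (\<eta> s) (\<eta> 0) < e" if "0 < s" "s < d / 2" for s
      using bounds[of s] nonneg[of s] d(2)[rule_format, of "2 * s"] that \<open>e > 0\<close>
      by (auto simp: \<eta>_def dist_real_def)
    then show "\<exists>d>0. \<forall>s\<in>{0..}. 0 < dist s 0 \<and> dist s 0 < d \<longrightarrow> dist (\<eta> s) (\<eta> 0) < e"
      using d(1) by (intro exI[of _ "d / 2"]) auto
  qed
  ultimately have "continuous_on {0..} \<eta>"
    unfolding continuous_on_eq_continuous_within
    by (metis atLeast_iff continuous_at_imp_continuous_within order_le_less)
  then show ?thesis
    using bounds by (auto simp: \<eta>_def)
qed

lemma has_real_derivative_integral_upper:
  fixes \<eta> :: "real \<Rightarrow> real"
  assumes "continuous_on {0..} \<eta>" "0 < u"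
  shows "((\<lambda>u. integral {0..u} \<eta>) has_real_derivative \<eta> u) (at u)"
proof -
  have "((\<lambda>u. integral {0..u} \<eta>) has_real_derivative \<eta> u) (at u within {0..u + 1})"
    by (rule integral_has_real_derivative) (use assms in \<open>auto intro: continuous_on_subset\<close>)
  moreover have "at u within {0..u + 1} = at u"
    by (rule at_within_interior) (use assms in auto)
  ultimately show ?thesis by simp
qed

lemma integral_averaged_modulus_bounds:
  fixes w \<eta> :: "real \<Rightarrow> real"
  assumes mono: "mono_on {0..} w" and nonneg: "\<And>r. 0 \<le> r \<Longrightarrow> 0 \<le> w r"
    and \<eta>_cont: "continuous_on {0..} \<eta>" and \<eta>0: "\<eta> 0 = 0"
    and \<eta>_bounds: "\<And>s. 0 < s \<Longrightarrow> w s \<le> \<eta> s \<and> \<eta> s \<le> w (2 * s)"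
    and r: "0 < r"
  shows "r * w r \<le> integral {0..2 * r} \<eta> \<and> integral {0..2 * r} \<eta> \<le> 2 * r * w (4 * r)"
proof
  have \<eta>_int: "\<eta> integrable_on {a..b}" if "0 \<le> a" for a b
    by (rule integrable_continuous_real, rule continuous_on_subset[OF \<eta>_cont]) (use that in auto)
  have "integral {r..2 * r} (\<lambda>s. w r) \<le> integral {r..2 * r} \<eta>"
  proof (rule integral_le[OF _ \<eta>_int])
    fix s assume s: "s \<in> {r..2 * r}"
    then have "w r \<le> w s" using r by (intro mono_onD[OF mono]) auto
    also have "\<dots> \<le> \<eta> s" using \<eta>_bounds[of s] s r by auto
    finally show "w r \<le> \<eta> s" .
  qed (use r in auto)
  moreover have "integral {0..r} \<eta> + integral {r..2 * r} \<eta> = integral {0..2 * r} \<eta>"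
    by (rule Henstock_Kurzweil_Integration.integral_combine) (use r \<eta>_int in auto)
  moreover have "0 \<le> \<eta> s" if "0 \<le> s" for s
    using \<eta>_bounds[of s] nonneg[of s] \<eta>0 that by (cases "s = 0") auto
  then have "0 \<le> integral {0..r} \<eta>"
    by (intro integral_nonneg[OF \<eta>_int]) auto
  ultimately show "r * w r \<le> integral {0..2 * r} \<eta>"
    using r by simp
  have "\<eta> s \<le> w (4 * r)" if "s \<in> {0..2 * r}" for s
  proof (cases "s = 0")
    case True
    then show ?thesis using nonneg[of "4 * r"] \<eta>0 r by simp
  next
    case False
    then have "\<eta> s \<le> w (2 * s)" using \<eta>_bounds[of s] that by auto
    also have "\<dots> \<le> w (4 * r)" using that False by (intro mono_onD[OF mono]) auto
    finally show ?thesis .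
  qed
  then have "integral {0..2 * r} \<eta> \<le> integral {0..2 * r} (\<lambda>s. w (4 * r))"
    by (intro integral_le[OF \<eta>_int]) auto
  then show "integral {0..2 * r} \<eta> \<le> 2 * r * w (4 * r)"
    using r by simp
qed

lemma monotone_modulus_C1_majorant:
  fixes w :: "real \<Rightarrow> real"
  assumes mono: "mono_on {0..} w" and nonneg: "\<And>r. 0 \<le> r \<Longrightarrow> 0 \<le> w r"
    and lim0: "\<And>e. e > 0 \<Longrightarrow> \<exists>d>0. \<forall>r. 0 \<le> r \<and> r < d \<longrightarrow> w r \<le> e"
  shows "\<exists>\<tau> \<tau>'. \<tau> 0 = 0 \<and> (\<forall>r>0. (\<tau> has_real_derivative \<tau>' r) (at r))
     \<and> continuous_on {0..} \<tau>' \<and> \<tau>' 0 = 0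
     \<and> (\<forall>e>0. \<exists>d>0. \<forall>r. 0 < r \<and> r < d \<longrightarrow> \<bar>\<tau> r\<bar> \<le> e * r)
     \<and> (\<forall>r\<ge>0. r * w r \<le> \<tau> r)"
proof -
  obtain \<eta> where \<eta>_cont: "continuous_on {0..} \<eta>" and \<eta>0: "\<eta> 0 = 0"
    and \<eta>_bounds: "\<And>s. 0 < s \<Longrightarrow> w s \<le> \<eta> s \<and> \<eta> s \<le> w (2 * s)"
    using averaged_modulus_exists[OF mono nonneg lim0] by blast
  define \<tau> where "\<tau> r = integral {0..2 * r} \<eta>" for r
  define \<tau>' where "\<tau>' r = 2 * \<eta> (2 * r)" for r
  have \<tau>_bounds: "r * w r \<le> \<tau> r \<and> \<tau> r \<le> 2 * r * w (4 * r)" if "0 < r" for r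
    unfolding \<tau>_def by (rule integral_averaged_modulus_bounds[OF mono nonneg \<eta>_cont \<eta>0 \<eta>_bounds that])
  have \<tau>_deriv: "(\<tau> has_real_derivative \<tau>' r) (at r)" if "0 < r" for r
  proof -
    have "((\<lambda>r. integral {0..2 * r} \<eta>) has_real_derivative \<eta> (2 * r) * 2) (at r)"
      by (rule DERIV_chain2[OF has_real_derivative_integral_upper[OF \<eta>_cont]])
         (use that in \<open>auto intro!: derivative_eq_intros\<close>)
    then show ?thesis by (simp add: \<tau>_def[abs_def] \<tau>'_def mult.commute)
  qed
  have \<tau>'_cont: "continuous_on {0..} \<tau>'"
    unfolding \<tau>'_def
    by (intro continuous_intros continuous_on_compose2[OF \<eta>_cont]) auto
  have \<tau>_little_o: "\<exists>d>0. \<forall>r. 0 < r \<and> r < d \<longrightarrow> \<bar>\<tau> r\<bar> \<le> e * r" if "e > 0" for e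
  proof -
    obtain d where d: "d > 0" "\<forall>r. 0 \<le> r \<and> r < d \<longrightarrow> w r \<le> e / 2"
      using lim0[of "e / 2"] \<open>e > 0\<close> by auto
    have "\<bar>\<tau> r\<bar> \<le> e * r" if "0 < r" "r < d / 4" for r
    proof -
      have "2 * r * w (4 * r) \<le> 2 * r * (e / 2)"
        using d that by (intro mult_left_mono) auto
      then have "2 * r * w (4 * r) \<le> e * r" by (simp add: algebra_simps)
      moreover have "0 \<le> r * w r" using nonneg[of r] that by simp
      ultimately show ?thesis using \<tau>_bounds[OF that(1)] by linarith
    qed
    then show ?thesis using d(1) by (intro exI[of _ "d / 4"]) auto
  qed
  have "\<tau> 0 = 0" "\<tau>' 0 = 0" by (simp_all add: \<tau>_def \<tau>'_def \<eta>0)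
  moreover have "r * w r \<le> \<tau> r" if "0 \<le> r" for r
    using \<tau>_bounds[of r] that \<open>\<tau> 0 = 0\<close> by (cases "r = 0") auto
  ultimately show ?thesis
    using \<tau>_deriv \<tau>'_cont \<tau>_little_o by blast
qed

lemma little_o_monotone_modulus:
  fixes q :: "'a::real_normed_vector \<Rightarrow> real"
  assumes bound: "\<And>z. norm (z - y) \<le> r \<Longrightarrow> q z \<le> norm (z - y)"
    and little_o: "\<And>e. e > 0 \<Longrightarrow> \<exists>d>0. \<forall>z. norm (z - y) < d \<longrightarrow> q z \<le> e * norm (z - y)"
  shows "\<exists>w. mono_on {0..} w \<and> (\<forall>s. 0 \<le> w s)
     \<and> (\<forall>e>0. \<exists>d>0. \<forall>s. 0 \<le> s \<and> s < d \<longrightarrow> w s \<le> e)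
     \<and> (\<forall>z. 0 < norm (z - y) \<and> norm (z - y) \<le> r \<longrightarrow> q z \<le> norm (z - y) * w (norm (z - y)))"
proof -
  define Q where "Q s = insert 0 {q z / norm (z - y) | z. 0 < norm (z - y) \<and> norm (z - y) \<le> min s r}" for s
  define w where "w s = Sup (Q s)" for s
  have Q_bdd: "bdd_above (Q s)" for s
    using bound by (intro bdd_aboveI[of _ 1]) (auto simp: Q_def divide_le_eq_1)
  have Q_ne: "Q s \<noteq> {}" for s by (simp add: Q_def)
  have "mono_on {0..} w"
  proof (rule mono_onI)
    fix s t :: real assume "s \<in> {0..}" "t \<in> {0..}" "s \<le> t"
    then have "Q s \<subseteq> Q t" unfolding Q_def by auto
    then show "w s \<le> w t" unfolding w_def by (rule cSup_subset_mono[OF Q_ne Q_bdd])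
  qed
  moreover have "0 \<le> w s" for s
    unfolding w_def by (rule cSup_upper[OF _ Q_bdd]) (simp add: Q_def)
  moreover have "\<exists>d>0. \<forall>s. 0 \<le> s \<and> s < d \<longrightarrow> w s \<le> e" if e: "e > 0" for e
  proof -
    obtain d where d: "d > 0" "\<forall>z. norm (z - y) < d \<longrightarrow> q z \<le> e * norm (z - y)"
      using little_o[OF e] by auto
    have "w s \<le> e" if "s < d" for s
      unfolding w_def
      using d e that by (intro cSup_least[OF Q_ne]) (auto simp: Q_def divide_le_eq)
    then show ?thesis using d(1) by blast
  qed
  moreover have "q z \<le> norm (z - y) * w (norm (z - y))"
    if "0 < norm (z - y)" "norm (z - y) \<le> r" for z
  proof -
    have "q z / norm (z - y) \<in> Q (norm (z - y))" unfolding Q_def using that by auto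
    then have "q z / norm (z - y) \<le> w (norm (z - y))" unfolding w_def by (rule cSup_upper[OF _ Q_bdd])
    then show ?thesis using that by (simp add: divide_le_eq mult.commute)
  qed
  ultimately show ?thesis by blast
qed

lemma radial_has_derivative:
  fixes y :: "'a::real_inner"
  assumes \<tau>0: "\<tau> 0 = 0" and \<tau>_deriv: "\<forall>r>0. (\<tau> has_real_derivative \<tau>' r) (at r)"
    and \<tau>'0: "\<tau>' 0 = 0"
    and little_o: "\<forall>e>0. \<exists>d>0. \<forall>r. 0 < r \<and> r < d \<longrightarrow> \<bar>\<tau> r\<bar> \<le> e * r"
  shows "((\<lambda>z. \<tau> (norm (z - y))) has_derivative (\<lambda>h. \<tau>' (norm (x - y)) * (h \<bullet> sgn (x - y)))) (at x)"
proof (cases "x = y")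
  case False
  then have d1: "((\<lambda>z. norm (z - y)) has_derivative (\<lambda>h. h \<bullet> sgn (x - y))) (at x)"
    using has_derivative_compose[OF has_derivative_diff[OF has_derivative_ident has_derivative_const]
        has_derivative_norm[of "x - y"]] by simp
  have d2: "(\<tau> has_derivative (\<lambda>u. \<tau>' (norm (x - y)) * u)) (at (norm (x - y)))"
    using has_field_derivative_imp_has_derivative[OF \<tau>_deriv[rule_format]] False by simp
  show ?thesis
    using has_derivative_compose[OF d1 d2] by simp
next
  case True
  have "((\<lambda>h. norm (\<tau> (norm h)) / norm h) \<longlongrightarrow> 0) (at (0::'a))"
    unfolding LIM_eq
  proof (intro allI impI)
    fix e :: real assume e: "e > 0"
    obtain d where d: "d > 0" "\<forall>r. 0 < r \<and> r < d \<longrightarrow> \<bar>\<tau> r\<bar> \<le> e / 2 * r"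
      using little_o e by (meson half_gt_zero)
    have "\<bar>\<tau> (norm h)\<bar> / norm h < e" if "h \<noteq> 0" "norm h < d" for h :: 'a
    proof -
      have "\<bar>\<tau> (norm h)\<bar> / norm h \<le> e / 2"
        using d that by (simp add: divide_le_eq)
      then show ?thesis using e by linarith
    qed
    then show "\<exists>s>0. \<forall>h::'a. h \<noteq> 0 \<and> norm (h - 0) < s \<longrightarrow> norm (norm (\<tau> (norm h)) / norm h - 0) < e"
      using d(1) by (intro exI[of _ d]) auto
  qed
  then show ?thesis
    using True by (simp add: has_derivative_at \<tau>0 \<tau>'0)
qed

lemma continuous_on_radial_derivative:
  fixes y :: "'a::real_inner"
  assumes \<tau>'_cont: "continuous_on {0..} \<tau>'" and \<tau>'0: "\<tau>' 0 = 0"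
  shows "continuous_on UNIV (\<lambda>x. \<tau>' (norm (x - y)) * (e \<bullet> sgn (x - y)))"
proof (rule continuous_at_imp_continuous_on, rule ballI)
  fix x :: 'a
  have "continuous_on UNIV (\<lambda>x. \<tau>' (norm (x - y)))"
    by (rule continuous_on_compose2[OF \<tau>'_cont]) (auto intro!: continuous_intros)
  then have \<tau>'_norm: "isCont (\<lambda>x. \<tau>' (norm (x - y))) x" for x
    by (simp add: continuous_on_eq_continuous_at)
  show "isCont (\<lambda>x. \<tau>' (norm (x - y)) * (e \<bullet> sgn (x - y))) x"
  proof (cases "x = y")
    case False
    then have "isCont (\<lambda>x. e \<bullet> sgn (x - y)) x"
      unfolding sgn_div_norm by (intro continuous_intros) auto
    with \<tau>'_norm show ?thesis by (rule isCont_mult)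
  next
    case True
    have "\<bar>e \<bullet> sgn (x - y)\<bar> \<le> norm e" for x
      using Cauchy_Schwarz_ineq2[of e "sgn (x - y)"] by (cases "x = y") (auto simp: norm_sgn)
    then have bound: "norm (\<tau>' (norm (x - y)) * (e \<bullet> sgn (x - y))) \<le> \<bar>\<tau>' (norm (x - y))\<bar> * norm e" for x
      by (simp add: abs_mult mult_left_mono)
    have "((\<lambda>x. \<tau>' (norm (x - y))) \<longlongrightarrow> 0) (at y)"
      using \<tau>'_norm[of y] \<tau>'0 by (simp add: isCont_def)
    then have "((\<lambda>x. \<tau>' (norm (x - y)) * (e \<bullet> sgn (x - y))) \<longlongrightarrow> 0) (at y)"
      by (intro Lim_null_comparison[OF always_eventually[OF allI[OF bound]]]
          tendsto_mult_left_zero tendsto_rabs_zero)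
    then show ?thesis using True \<tau>'0 by (simp add: isCont_def)
  qed
qed

lemma little_o_C1_majorant:
  fixes q :: "'a::euclidean_space \<Rightarrow> real"
  assumes bound: "\<And>z. norm (z - y) \<le> r \<Longrightarrow> q z \<le> norm (z - y)"
    and little_o: "\<And>e. e > 0 \<Longrightarrow> \<exists>d>0. \<forall>z. norm (z - y) < d \<longrightarrow> q z \<le> e * norm (z - y)"
  shows "\<exists>\<rho>. Ck_on 1 UNIV \<rho> \<and> \<rho> y = 0 \<and> frechet_derivative \<rho> (at y) = (\<lambda>h. 0)
     \<and> (\<forall>z. 0 < norm (z - y) \<and> norm (z - y) \<le> r \<longrightarrow> q z \<le> \<rho> z)"
proof -
  obtain w where w_mono: "mono_on {0..} w" and w_nonneg: "\<And>s. 0 \<le> w s"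
    and w_lim: "\<And>e. e > 0 \<Longrightarrow> \<exists>d>0. \<forall>s. 0 \<le> s \<and> s < d \<longrightarrow> w s \<le> e"
    and q_w: "\<And>z. 0 < norm (z - y) \<Longrightarrow> norm (z - y) \<le> r \<Longrightarrow> q z \<le> norm (z - y) * w (norm (z - y))"
    using little_o_monotone_modulus[of y r q, OF bound little_o] by blast
  obtain \<tau> \<tau>' where \<tau>0: "\<tau> 0 = 0" and \<tau>_deriv: "\<forall>r>0. (\<tau> has_real_derivative \<tau>' r) (at r)"
    and \<tau>'_cont: "continuous_on {0..} \<tau>'" and \<tau>'0: "\<tau>' 0 = 0"
    and \<tau>_little_o: "\<forall>e>0. \<exists>d>0. \<forall>r. 0 < r \<and> r < d \<longrightarrow> \<bar>\<tau> r\<bar> \<le> e * r"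
    and \<tau>_ge: "\<forall>r\<ge>0. r * w r \<le> \<tau> r"
    using monotone_modulus_C1_majorant[OF w_mono w_nonneg w_lim] by blast
  define \<rho> where "\<rho> z = \<tau> (norm (z - y))" for z
  have \<rho>_deriv: "(\<rho> has_derivative (\<lambda>h. \<tau>' (norm (x - y)) * (h \<bullet> sgn (x - y)))) (at x)" for x
    unfolding \<rho>_def[abs_def] by (rule radial_has_derivative[OF \<tau>0 \<tau>_deriv \<tau>'0 \<tau>_little_o])
  then have \<rho>_frechet: "frechet_derivative \<rho> (at x) = (\<lambda>h. \<tau>' (norm (x - y)) * (h \<bullet> sgn (x - y)))" for x
    by (rule frechet_derivative_at[symmetric])
  have "Ck_on 1 UNIV \<rho>"
    using \<rho>_deriv continuous_on_radial_derivative[OF \<tau>'_cont \<tau>'0]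
    by (auto simp: \<rho>_frechet differentiable_def)
  moreover have "q z \<le> \<rho> z" if "0 < norm (z - y)" "norm (z - y) \<le> r" for z
    using q_w[OF that] \<tau>_ge norm_ge_zero order_trans unfolding \<rho>_def by blast
  ultimately show ?thesis
    using \<rho>_frechet[of y] \<tau>0 \<tau>'0 by (auto simp: \<rho>_def)
qed

lemma frechet_subgradient_C1_minorant:
  fixes f :: "'a::euclidean_space \<Rightarrow> ereal"
  assumes v: "v \<in> frechet_subdiff f y"
  shows "\<exists>r>0. \<exists>\<Theta>. Ck_on 1 (ball y r) \<Theta> \<and> ereal (\<Theta> y) = f y
     \<and> frechet_derivative \<Theta> (at y) = inner v \<and> (\<forall>z\<in>ball y r. ereal (\<Theta> z) \<le> f z)"
proof -
  obtain c where c: "f y = ereal c"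
    using v by (cases "f y") (auto simp: frechet_subdiff_def)
  have frechet: "\<exists>\<delta>>0. \<forall>z. norm (z - y) < \<delta> \<longrightarrow> ereal (c + inner v (z - y) - e * norm (z - y)) \<le> f z"
    if "e > 0" for e
    using v that c by (auto simp: frechet_subdiff_def)
  obtain r0 where r0: "r0 > 0"
    "\<forall>z. norm (z - y) < r0 \<longrightarrow> ereal (c + inner v (z - y) - 1 * norm (z - y)) \<le> f z"
    using frechet[of 1] by auto
  define r where "r = r0 / 2"
  \<comment> \<open>\<open>q\<close> is the amount by which \<open>f\<close> dips below its first-order model at \<open>y\<close>; it is \<open>o(|z - y|)\<close>,
    so subtracting a \<open>C\<^sup>1\<close> majorant of it from the model gives the minorant.\<close>
  define q where "q z = (if f z = \<infinity> then 0 else max 0 (c + inner v (z - y) - real_of_ereal (f z)))" for z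
  have q_le: "q z \<le> t" if "ereal (c + inner v (z - y) - t) \<le> f z" "0 \<le> t" for z t
    using that by (cases "f z") (auto simp: q_def)
  obtain \<rho> where \<rho>_C1: "Ck_on 1 UNIV \<rho>" and \<rho>y: "\<rho> y = 0"
    and \<rho>_frechet: "frechet_derivative \<rho> (at y) = (\<lambda>h. 0)"
    and q_\<rho>: "\<And>z. 0 < norm (z - y) \<Longrightarrow> norm (z - y) \<le> r \<Longrightarrow> q z \<le> \<rho> z"
  proof (rule little_o_C1_majorant[of y r q, THEN exE], goal_cases)
    case (1 z)
    then show ?case using r0 by (intro q_le) (auto simp: r_def)
  next
    case (2 e)
    then show ?case using frechet[of e] by (auto intro!: q_le)
  qed (use that in blast)
  define \<Theta> where "\<Theta> z = c + inner v (z - y) - \<rho> z" for z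
  have \<Theta>_deriv: "(\<Theta> has_derivative (\<lambda>k. inner v k - frechet_derivative \<rho> (at x) k)) (at x)" for x
    unfolding \<Theta>_def[abs_def] using \<rho>_C1
    by (auto intro!: derivative_eq_intros simp: frechet_derivative_works[symmetric])
  then have \<Theta>_frechet: "frechet_derivative \<Theta> (at x) = (\<lambda>k. inner v k - frechet_derivative \<rho> (at x) k)" for x
    by (rule frechet_derivative_at[symmetric])
  have "Ck_on 1 (ball y r) \<Theta>"
    using \<Theta>_deriv \<rho>_C1 by (auto simp: \<Theta>_frechet differentiable_def intro!: continuous_intros
        intro: continuous_on_subset)
  moreover have "ereal (\<Theta> z) \<le> f z" if "z \<in> ball y r" for z
  proof (cases "f z")
    case (real fz)
    have "q z \<le> \<rho> z"
      using that q_\<rho>[of z] by (cases "z = y") (auto simp: q_def c \<rho>y dist_norm norm_minus_commute)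
    then show ?thesis
      using real by (auto simp: q_def \<Theta>_def)
  next
    case MInf
    have "norm (z - y) < r0"
      using that r0 by (auto simp: r_def dist_norm norm_minus_commute)
    then show ?thesis
      using r0 MInf by force
  qed simp
  moreover have "r > 0" "ereal (\<Theta> y) = f y" "frechet_derivative \<Theta> (at y) = inner v"
    using r0 c \<rho>y by (auto simp: r_def \<Theta>_def \<Theta>_frechet \<rho>_frechet)
  ultimately show ?thesis
    by (intro exI[of _ r] exI[of _ \<Theta>]) auto
qed

section \<open>Slice charts and tangent spaces\<close>

lemma frechet_derivative_basis_expansion:
  fixes f :: "'a::euclidean_space \<Rightarrow> 'b::real_normed_vector"
  assumes "f differentiable (at s)"
  shows "frechet_derivative f (at s) u = (\<Sum>b\<in>Basis. (u \<bullet> b) *\<^sub>R frechet_derivative f (at s) b)"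
proof -
  have lin: "linear (frechet_derivative f (at s))"
    by (rule linear_frechet_derivative[OF assms])
  have "frechet_derivative f (at s) u = frechet_derivative f (at s) (\<Sum>b\<in>Basis. (u \<bullet> b) *\<^sub>R b)"
    by (simp add: euclidean_representation)
  also have "\<dots> = (\<Sum>b\<in>Basis. (u \<bullet> b) *\<^sub>R frechet_derivative f (at s) b)"
    by (simp add: linear_sum[OF lin] linear_scale[OF lin])
  finally show ?thesis .
qed

lemma Ck_on_1_continuous_on_directional_derivative:
  assumes "Ck_on 1 V f"
  shows "continuous_on V (\<lambda>s. frechet_derivative f (at s) u)"
proof -
  have "continuous_on V (\<lambda>s. \<Sum>b\<in>Basis. (u \<bullet> b) *\<^sub>R frechet_derivative f (at s) b)"
    using assms by (auto intro!: continuous_intros)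
  then show ?thesis
    by (rule continuous_on_eq) (use assms in \<open>auto intro: frechet_derivative_basis_expansion[symmetric]\<close>)
qed

lemma vector_derivative_in_subspace:
  fixes c :: "real \<Rightarrow> 'a::euclidean_space"
  assumes S: "subspace S" and c: "(c has_vector_derivative c') (at 0)"
    and e: "e > 0" and in_S: "\<And>t. t \<in> ball 0 e \<Longrightarrow> c t \<in> S"
  shows "c' \<in> S"
proof -
  obtain a n where a: "a \<in> span S" and n: "\<And>w. w \<in> span S \<Longrightarrow> orthogonal n w" and c': "c' = a + n"
    using orthogonal_subspace_decomp_exists by blast
  have "((\<lambda>t. n \<bullet> c t) has_derivative (\<lambda>t. n \<bullet> (t *\<^sub>R c'))) (at 0)"
    using c unfolding has_vector_derivative_def by (rule has_derivative_inner_right)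
  moreover have "((\<lambda>t. n \<bullet> c t) has_derivative (\<lambda>t. 0)) (at 0)"
  proof (rule has_derivative_transform_within_open[OF has_derivative_const open_ball])
    show "0 \<in> ball (0::real) e" using e by simp
    show "0 = n \<bullet> c t" if "t \<in> ball 0 e" for t
      using n[OF span_base[OF in_S[OF that]]] by (simp add: orthogonal_def)
  qed
  ultimately have "(\<lambda>t. n \<bullet> (t *\<^sub>R c')) = (\<lambda>t. 0)"
    by (rule has_derivative_unique)
  then have "n \<bullet> c' = 0"
    by (metis inner_scaleR_right mult_1)
  moreover have "n \<bullet> a = 0"
    using n[OF a] by (simp add: orthogonal_def)
  ultimately have "n = 0"
    using c' by (simp add: inner_add_right)
  then show ?thesis
    using a c' S by (metis add.right_neutral span_eq_iff)
qed

locale slice_chart =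
  fixes M U V :: "'a::euclidean_space set" and \<phi> \<psi> :: "'a \<Rightarrow> 'a" and S :: "'a set" and y :: 'a
  assumes open_U: "open U" and y_in_U: "y \<in> U" and open_V: "open V"
    and homeo: "homeomorphism U V \<phi> \<psi>"
    and smooth_\<phi>: "smooth_on U \<phi>" and smooth_\<psi>: "smooth_on V \<psi>"
    and subspace_S: "subspace S" and slice: "\<phi> ` (M \<inter> U) = V \<inter> S" and y_in_M: "y \<in> M"
begin

lemma \<psi>_\<phi>: "x \<in> U \<Longrightarrow> \<psi> (\<phi> x) = x"
  using homeo by (auto simp: homeomorphism_def)

lemma \<phi>_in_V: "x \<in> U \<Longrightarrow> \<phi> x \<in> V"
  using homeo by (auto simp: homeomorphism_def)

lemma \<phi>_in_S: "x \<in> M \<Longrightarrow> x \<in> U \<Longrightarrow> \<phi> x \<in> S"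
  using slice by blast

lemma \<psi>_in_M:
  assumes "s \<in> V" "s \<in> S"
  shows "\<psi> s \<in> M"
proof -
  obtain x where "x \<in> M \<inter> U" "s = \<phi> x"
    using assms slice by blast
  then show ?thesis
    using \<psi>_\<phi> by auto
qed

lemma C1_\<phi>: "Ck_on 1 U \<phi>" and C1_\<psi>: "Ck_on 1 V \<psi>"
  using smooth_\<phi> smooth_\<psi> by (simp_all add: smooth_on_def)

definition s0 where "s0 = \<phi> y"
definition D\<psi> where "D\<psi> = frechet_derivative \<psi> (at s0)"
definition D\<phi> where "D\<phi> = frechet_derivative \<phi> (at y)"

lemma s0_in_V: "s0 \<in> V" and s0_in_S: "s0 \<in> S" and \<psi>_s0: "\<psi> s0 = y"
  using \<phi>_in_V \<phi>_in_S \<psi>_\<phi> y_in_U y_in_M by (simp_all add: s0_def)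

lemma has_derivative_\<psi>: "s \<in> V \<Longrightarrow> (\<psi> has_derivative frechet_derivative \<psi> (at s)) (at s)"
  using C1_\<psi> by (simp add: frechet_derivative_works)

lemma has_derivative_D\<psi>: "(\<psi> has_derivative D\<psi>) (at s0)"
  using has_derivative_\<psi>[OF s0_in_V] by (simp add: D\<psi>_def)

lemma has_derivative_D\<phi>: "(\<phi> has_derivative D\<phi>) (at y)"
  using C1_\<phi> y_in_U by (simp add: D\<phi>_def frechet_derivative_works)

lemma D\<psi>_D\<phi>: "D\<psi> (D\<phi> v) = v"
proof -
  have "(\<psi> \<circ> \<phi> has_derivative D\<psi> \<circ> D\<phi>) (at y)"
    using diff_chain_at[OF has_derivative_D\<phi>] has_derivative_D\<psi> by (simp add: s0_def)
  then have "(id has_derivative D\<psi> \<circ> D\<phi>) (at y)"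
    by (rule has_derivative_transform_within_open[OF _ open_U y_in_U]) (simp add: \<psi>_\<phi>)
  then have "D\<psi> \<circ> D\<phi> = id"
    using has_derivative_id by (rule has_derivative_unique)
  then show ?thesis
    by (metis comp_apply id_apply)
qed

lemma D\<psi>_in_tangent_space:
  assumes u: "u \<in> S"
  shows "D\<psi> u \<in> tangent_space M y"
proof -
  obtain e where e: "e > 0" "ball s0 e \<subseteq> V"
    using open_V s0_in_V openE by blast
  define e' where "e' = e / (norm u + 1)"
  have e': "e' > 0"
    using e by (simp add: e'_def add_nonneg_pos)
  have line_in_V: "s0 + t *\<^sub>R u \<in> V" if "t \<in> {-e'<..<e'}" for t
  proof -
    have "norm (t *\<^sub>R u) \<le> e' * norm u"
      using that by (simp, intro mult_right_mono) auto
    also have "\<dots> < e"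
      using e by (simp add: e'_def divide_less_eq add_nonneg_pos)
    finally show ?thesis
      using e(2) by (auto simp: dist_norm)
  qed
  define \<gamma> where "\<gamma> t = \<psi> (s0 + t *\<^sub>R u)" for t
  define \<gamma>' where "\<gamma>' t = frechet_derivative \<psi> (at (s0 + t *\<^sub>R u)) u" for t
  have \<gamma>_deriv: "(\<gamma> has_vector_derivative \<gamma>' t) (at t)" if "t \<in> {-e'<..<e'}" for t
  proof -
    have "((\<lambda>t. s0 + t *\<^sub>R u) has_derivative (\<lambda>h. h *\<^sub>R u)) (at t)"
      by (auto intro!: derivative_eq_intros)
    from diff_chain_at[OF this has_derivative_\<psi>[OF line_in_V[OF that]]]
    show ?thesis
      using linear_frechet_derivative[of \<psi>] C1_\<psi> line_in_V[OF that]
      by (simp add: has_vector_derivative_def \<gamma>_def[abs_def] \<gamma>'_def o_def linear_scale)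
  qed
  have "continuous_on {-e'<..<e'} (\<lambda>t. s0 + t *\<^sub>R u)"
    by (intro continuous_intros)
  then have "continuous_on {-e'<..<e'} \<gamma>'"
    unfolding \<gamma>'_def
    by (rule continuous_on_compose2[OF Ck_on_1_continuous_on_directional_derivative[OF C1_\<psi>]])
       (use line_in_V in blast)
  then have "\<gamma> C1_differentiable_on {-e'<..<e'}"
    unfolding C1_differentiable_on_def using \<gamma>_deriv by blast
  moreover have "\<gamma> t \<in> M" if "t \<in> {-e'<..<e'}" for t
    unfolding \<gamma>_def
    by (rule \<psi>_in_M[OF line_in_V[OF that]]) (use subspace_S s0_in_S u in \<open>auto intro: subspace_add subspace_scale\<close>)
  moreover have "vector_derivative \<gamma> (at 0) = D\<psi> u"
    using vector_derivative_at[OF \<gamma>_deriv] e' by (simp add: \<gamma>'_def D\<psi>_def)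
  moreover have "\<gamma> 0 = y"
    by (simp add: \<gamma>_def \<psi>_s0)
  ultimately show ?thesis
    unfolding tangent_space_def mem_Collect_eq using e'
    by (intro exI[of _ \<gamma>] exI[of _ e'] conjI ballI) auto
qed

lemma tangent_space_subset_D\<psi>_image:
  assumes v: "v \<in> tangent_space M y"
  shows "v \<in> D\<psi> ` S"
proof -
  obtain \<gamma> e where e: "e > 0" and \<gamma>0: "\<gamma> 0 = y" and \<gamma>_in_M: "\<forall>t\<in>{-e<..<e}. \<gamma> t \<in> M"
    and \<gamma>_C1: "\<gamma> C1_differentiable_on {-e<..<e}" and \<gamma>'0: "vector_derivative \<gamma> (at 0) = v"
    using v unfolding tangent_space_def by blast
  obtain D where "\<forall>t\<in>{-e<..<e}. (\<gamma> has_vector_derivative D t) (at t)"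
    using \<gamma>_C1 by (auto simp: C1_differentiable_on_def)
  then have D0: "(\<gamma> has_vector_derivative D 0) (at 0)"
    using e by simp
  then have \<gamma>_deriv: "(\<gamma> has_vector_derivative v) (at 0)"
    using vector_derivative_at[OF D0] \<gamma>'0 by simp
  obtain r where r: "r > 0" "ball y r \<subseteq> U"
    using open_U y_in_U openE by blast
  obtain d where d: "d > 0" "\<forall>t. dist t 0 < d \<longrightarrow> dist (\<gamma> t) (\<gamma> 0) < r"
    using has_vector_derivative_continuous[OF \<gamma>_deriv] r(1)
    unfolding continuous_at_eps_delta by blast
  have "(\<phi> has_derivative D\<phi>) (at (\<gamma> 0) within range \<gamma>)"
    using has_derivative_D\<phi> \<gamma>0 by (simp add: has_derivative_at_withinI)
  then have \<phi>\<gamma>_deriv: "(\<phi> \<circ> \<gamma> has_vector_derivative D\<phi> v) (at 0)"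
    by (rule vector_derivative_diff_chain_within[OF \<gamma>_deriv])
  have \<phi>\<gamma>_in_S: "(\<phi> \<circ> \<gamma>) t \<in> S" if "t \<in> ball 0 (min d e)" for t
  proof -
    have "dist (\<gamma> t) y < r"
      using that d \<gamma>0 by auto
    then have "\<gamma> t \<in> U"
      using r(2) by (auto simp: dist_commute)
    moreover have "\<gamma> t \<in> M"
      using that \<gamma>_in_M by (auto simp: dist_real_def abs_less_iff)
    ultimately show ?thesis
      by (simp add: \<phi>_in_S)
  qed
  have "D\<phi> v \<in> S"
    using vector_derivative_in_subspace[of S "\<phi> \<circ> \<gamma>" "D\<phi> v" "min d e"] subspace_S \<phi>\<gamma>_deriv \<phi>\<gamma>_in_S d(1) e
    by simp
  then show ?thesis
    using D\<psi>_D\<phi>[of v] by force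
qed

lemma tangent_space_eq: "tangent_space M y = D\<psi> ` S"
  using tangent_space_subset_D\<psi>_image D\<psi>_in_tangent_space by blast

lemma subspace_tangent_space: "subspace (tangent_space M y)"
proof -
  have "linear D\<psi>"
    using has_derivative_D\<psi> by (rule has_derivative_linear)
  then show ?thesis
    unfolding tangent_space_eq using subspace_S by (rule linear_subspace_image)
qed

lemma tangent_space_first_order_approx:
  assumes e: "e > 0"
  shows "\<exists>d>0. \<forall>z\<in>M. norm (z - y) < d \<longrightarrow> (\<exists>t\<in>tangent_space M y. norm (z - y - t) \<le> e * norm (z - y))"
proof -
  \<comment> \<open>As \<open>z = \<psi> (\<phi> z)\<close>, linearizing \<open>\<psi>\<close> at \<open>s0\<close> gives \<open>z - y \<approx> D\<psi> (\<phi> z - s0)\<close>, which is tangent since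
    \<open>\<phi> z - s0 \<in> S\<close>; the error is controlled through \<open>norm (\<phi> z - s0) \<le> (K + 1) * norm (z - y)\<close>.\<close>
  obtain K where K: "K > 0" "\<And>x. norm (D\<phi> x) \<le> norm x * K"
    using bounded_linear.pos_bounded[OF has_derivative_bounded_linear[OF has_derivative_D\<phi>]] by blast
  define e' where "e' = e / (K + 1)"
  have e': "e' > 0" using e K by (simp add: e'_def)
  obtain d1 where d1: "d1 > 0"
    "\<forall>s. norm (s - s0) < d1 \<longrightarrow> norm (\<psi> s - \<psi> s0 - D\<psi> (s - s0)) \<le> e' * norm (s - s0)"
    using has_derivative_D\<psi> e' unfolding has_derivative_at_alt by blast
  obtain d2 where d2: "d2 > 0"
    "\<forall>z. norm (z - y) < d2 \<longrightarrow> norm (\<phi> z - \<phi> y - D\<phi> (z - y)) \<le> 1 * norm (z - y)"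
    using has_derivative_D\<phi> unfolding has_derivative_at_alt by (meson zero_less_one)
  obtain r where r: "r > 0" "ball y r \<subseteq> U"
    using open_U y_in_U openE by blast
  define d where "d = min (min d2 r) (d1 / (K + 1))"
  have "\<exists>t\<in>tangent_space M y. norm (z - y - t) \<le> e * norm (z - y)"
    if z_in_M: "z \<in> M" and z_near: "norm (z - y) < d" for z
  proof -
    have z_in_U: "z \<in> U"
      using z_near r by (auto simp: d_def dist_norm norm_minus_commute)
    have "norm (\<phi> z - s0 - D\<phi> (z - y)) \<le> norm (z - y)"
      using d2 z_near by (simp add: d_def s0_def)
    then have "norm (\<phi> z - s0) \<le> norm (D\<phi> (z - y)) + norm (z - y)"
      using norm_triangle_ineq[of "\<phi> z - s0 - D\<phi> (z - y)" "D\<phi> (z - y)"] by simp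
    also have "\<dots> \<le> (K + 1) * norm (z - y)"
      using K(2)[of "z - y"] by (simp add: algebra_simps)
    finally have chart_bound: "norm (\<phi> z - s0) \<le> (K + 1) * norm (z - y)" .
    also have "\<dots> < d1"
      using z_near K(1) by (simp add: d_def pos_less_divide_eq mult.commute)
    finally have "norm (\<psi> (\<phi> z) - \<psi> s0 - D\<psi> (\<phi> z - s0)) \<le> e' * norm (\<phi> z - s0)"
      using d1 by blast
    also have "\<dots> \<le> e' * ((K + 1) * norm (z - y))"
      using chart_bound e' by (simp add: mult_left_mono)
    also have "\<dots> = e * norm (z - y)"
      using K by (simp add: e'_def)
    finally have "norm (z - y - D\<psi> (\<phi> z - s0)) \<le> e * norm (z - y)"
      using \<psi>_\<phi>[OF z_in_U] \<psi>_s0 by simp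
    moreover have "D\<psi> (\<phi> z - s0) \<in> tangent_space M y"
      using subspace_S s0_in_S \<phi>_in_S[OF z_in_M z_in_U]
      by (intro D\<psi>_in_tangent_space subspace_diff)
    ultimately show ?thesis by blast
  qed
  moreover have "d > 0"
    using d1 d2 r K by (simp add: d_def)
  ultimately show ?thesis by blast
qed

end

lemma embedded_submanifold_slice_chart:
  assumes "embedded_submanifold M" "y \<in> M"
  obtains U V \<phi> \<psi> S where "slice_chart M U V \<phi> \<psi> S y"
proof -
  have "\<exists>U V \<phi> \<psi> S. slice_chart M U V \<phi> \<psi> S y"
    using assms unfolding embedded_submanifold_def slice_chart_def by metis
  then show ?thesis
    using that by blast
qed

lemma subspace_tangent_space:
  assumes "embedded_submanifold M" "y \<in> M"
  shows "subspace (tangent_space M y)"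
proof -
  obtain U V \<phi> \<psi> S where "slice_chart M U V \<phi> \<psi> S y"
    using embedded_submanifold_slice_chart[OF assms] .
  then show ?thesis
    by (rule slice_chart.subspace_tangent_space)
qed

lemma tangent_space_first_order_approx:
  assumes "embedded_submanifold M" "y \<in> M" "e > 0"
  shows "\<exists>d>0. \<forall>z\<in>M. norm (z - y) < d \<longrightarrow> (\<exists>t\<in>tangent_space M y. norm (z - y - t) \<le> e * norm (z - y))"
proof -
  obtain U V \<phi> \<psi> S where "slice_chart M U V \<phi> \<psi> S y"
    using embedded_submanifold_slice_chart[OF assms(1,2)] .
  then show ?thesis
    using assms(3) by (rule slice_chart.tangent_space_first_order_approx)
qed

section \<open>Subdifferentials of \<open>h + \<delta>\<^sub>M\<close> and of \<open>h\<close> on \<open>M\<close>\<close>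

lemma subspace_orthogonal_projection:
  fixes v :: "'a::euclidean_space"
  assumes "subspace T"
  shows "\<exists>a\<in>T. (\<forall>w\<in>T. a \<bullet> w = v \<bullet> w) \<and> norm a \<le> norm v"
proof -
  obtain a n where a: "a \<in> span T" and n: "\<And>w. w \<in> span T \<Longrightarrow> orthogonal n w" and v: "v = a + n"
    using orthogonal_subspace_decomp_exists by blast
  have aT: "a \<in> T" using a assms by (metis span_eq_iff)
  have "a \<bullet> w = v \<bullet> w" if "w \<in> T" for w
    using n[of w] that v by (simp add: span_base orthogonal_def inner_add_left)
  moreover have "(norm v)\<^sup>2 = (norm a)\<^sup>2 + (norm n)\<^sup>2"
    using n[OF a] v norm_add_Pythagorean by (simp add: orthogonal_commute)
  then have "(norm a)\<^sup>2 \<le> (norm v)\<^sup>2"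
    by simp
  then have "norm a \<le> norm v"
    by (simp add: power2_le_iff_abs_le)
  ultimately show ?thesis using aT by blast
qed

lemma first_order_lower_bound_along_tangents:
  fixes \<Theta> :: "'a::euclidean_space \<Rightarrow> real"
  assumes D\<Theta>: "(\<Theta> has_derivative D\<Theta>) (at y)"
    and grad: "\<And>t. t \<in> T \<Longrightarrow> g \<bullet> t = D\<Theta> t"
    and approx: "\<And>e. e > 0 \<Longrightarrow>
      \<exists>d>0. \<forall>z\<in>M. norm (z - y) < d \<longrightarrow> (\<exists>t\<in>T. norm (z - y - t) \<le> e * norm (z - y))"
    and e: "e > 0"
  shows "\<exists>d>0. \<forall>z\<in>M. norm (z - y) < d \<longrightarrow> g \<bullet> (z - y) - e * norm (z - y) \<le> \<Theta> z - \<Theta> y"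
proof -
  have lin: "linear D\<Theta>"
    using D\<Theta> by (rule has_derivative_linear)
  obtain K where K: "K > 0" "\<And>x. norm (D\<Theta> x) \<le> norm x * K"
    using bounded_linear.pos_bounded[OF has_derivative_bounded_linear[OF D\<Theta>]] by blast
  define e1 where "e1 = e / (2 * (K + norm g + 1))"
  have e1: "e1 > 0" "(norm g + K) * e1 \<le> e / 2"
    using e K by (auto simp: e1_def field_simps add_pos_nonneg)
  obtain d1 where d1: "d1 > 0"
    "\<forall>z\<in>M. norm (z - y) < d1 \<longrightarrow> (\<exists>t\<in>T. norm (z - y - t) \<le> e1 * norm (z - y))"
    using approx[OF e1(1)] by blast
  obtain d2 where d2: "d2 > 0"
    "\<forall>z. norm (z - y) < d2 \<longrightarrow> norm (\<Theta> z - \<Theta> y - D\<Theta> (z - y)) \<le> e / 2 * norm (z - y)"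
    using D\<Theta> e unfolding has_derivative_at_alt by (meson half_gt_zero)
  have "g \<bullet> (z - y) - e * norm (z - y) \<le> \<Theta> z - \<Theta> y"
    if z: "z \<in> M" "norm (z - y) < min d1 d2" for z
  proof -
    obtain t where t: "t \<in> T" "norm (z - y - t) \<le> e1 * norm (z - y)"
      using d1 z by auto
    define err where "err = z - y - t"
    have "D\<Theta> (z - y) = g \<bullet> t + D\<Theta> err" "g \<bullet> (z - y) = g \<bullet> t + g \<bullet> err"
      using grad[OF t(1)] linear_add[OF lin, of t err] by (simp_all add: err_def inner_diff_right)
    moreover have "\<bar>g \<bullet> err\<bar> \<le> norm g * (e1 * norm (z - y))"
      using Cauchy_Schwarz_ineq2[of g err] t(2) mult_left_mono[OF t(2), of "norm g"]
      by (simp add: err_def)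
    moreover have "\<bar>D\<Theta> err\<bar> \<le> K * (e1 * norm (z - y))"
      using order_trans[OF K(2)[of err] mult_right_mono[OF t(2)[folded err_def] less_imp_le[OF K(1)]]]
      by (simp add: mult_ac)
    moreover have "norm g * (e1 * norm (z - y)) + K * (e1 * norm (z - y)) \<le> e / 2 * norm (z - y)"
      using mult_right_mono[OF e1(2) norm_ge_zero[of "z - y"]] by (simp add: algebra_simps)
    moreover have "\<bar>\<Theta> z - \<Theta> y - D\<Theta> (z - y)\<bar> \<le> e / 2 * norm (z - y)"
      using d2 z by auto
    ultimately show ?thesis
      by linarith
  qed
  then show ?thesis
    using d1(1) d2(1) by (intro exI[of _ "min d1 d2"]) auto
qed

lemma plus_indicator_in [simp]: "x \<in> M \<Longrightarrow> plus_indicator h M x = h x"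
  and plus_indicator_notin [simp]: "x \<notin> M \<Longrightarrow> plus_indicator h M x = \<infinity>"
  by (simp_all add: plus_indicator_def)

lemma riem_frechet_subdiff_subset_frechet_subdiff:
  assumes M: "embedded_submanifold M"
  shows "riem_frechet_subdiff M h y \<subseteq> frechet_subdiff (plus_indicator h M) y"
proof
  fix g assume "g \<in> riem_frechet_subdiff M h y"
  then obtain U \<Theta> where y_in_M: "y \<in> M" and hy: "\<bar>h y\<bar> \<noteq> \<infinity>" and "open U" "y \<in> U"
    and C1: "Ck_on 1 U \<Theta>" and local_min: "\<forall>z\<in>M \<inter> U. h y - ereal (\<Theta> y) \<le> h z - ereal (\<Theta> z)"
    and grad: "\<forall>t\<in>tangent_space M y. g \<bullet> t = frechet_derivative \<Theta> (at y) t"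
    unfolding riem_frechet_subdiff_def mem_Collect_eq by (elim conjE exE) (rule that, assumption+)
  obtain c where c: "h y = ereal c"
    using hy by (cases "h y") auto
  obtain r where r: "r > 0" "ball y r \<subseteq> U"
    using \<open>open U\<close> \<open>y \<in> U\<close> openE by blast
  have D\<Theta>: "(\<Theta> has_derivative frechet_derivative \<Theta> (at y)) (at y)"
    using C1 \<open>y \<in> U\<close> by (simp add: frechet_derivative_works)
  have "\<exists>\<delta>>0. \<forall>z. norm (z - y) < \<delta> \<longrightarrow>
      ereal (c + g \<bullet> (z - y) - e * norm (z - y)) \<le> plus_indicator h M z" if e: "e > 0" for e
  proof -
    obtain d where d: "d > 0"
      "\<forall>z\<in>M. norm (z - y) < d \<longrightarrow> g \<bullet> (z - y) - e * norm (z - y) \<le> \<Theta> z - \<Theta> y"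
      using first_order_lower_bound_along_tangents[OF D\<Theta> _ tangent_space_first_order_approx[OF M y_in_M] e]
        grad by blast
    have "ereal (c + g \<bullet> (z - y) - e * norm (z - y)) \<le> h z"
      if "z \<in> M" "norm (z - y) < min d r" for z
    proof -
      have "ereal c - ereal (\<Theta> y) \<le> h z - ereal (\<Theta> z)"
        using local_min r that c by (auto simp: dist_norm norm_minus_commute)
      moreover have "g \<bullet> (z - y) - e * norm (z - y) \<le> \<Theta> z - \<Theta> y"
        using d that by auto
      ultimately show ?thesis
        by (cases "h z") auto
    qed
    then show ?thesis
      using d(1) r(1) by (intro exI[of _ "min d r"]) (auto simp: plus_indicator_def)
  qed
  then show "g \<in> frechet_subdiff (plus_indicator h M) y"
    using y_in_M c by (simp add: frechet_subdiff_def)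
qed

lemma frechet_subdiff_plus_indicator_imp_riem:
  assumes M: "embedded_submanifold M" and v: "v \<in> frechet_subdiff (plus_indicator h M) y"
  shows "y \<in> M \<and> (\<exists>g\<in>riem_frechet_subdiff M h y. norm g \<le> norm v)"
proof -
  have y_in_M: "y \<in> M"
    using v by (cases "y \<in> M") (auto simp: frechet_subdiff_def)
  obtain r \<Theta> where "r > 0" and C1: "Ck_on 1 (ball y r) \<Theta>"
    and \<Theta>y: "ereal (\<Theta> y) = h y" and D\<Theta>: "frechet_derivative \<Theta> (at y) = inner v"
    and below: "\<forall>z\<in>ball y r. ereal (\<Theta> z) \<le> plus_indicator h M z"
    using frechet_subgradient_C1_minorant[OF v] y_in_M by auto
  obtain g where g: "g \<in> tangent_space M y" "\<forall>w\<in>tangent_space M y. g \<bullet> w = v \<bullet> w"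
    and "norm g \<le> norm v"
    using subspace_orthogonal_projection[OF subspace_tangent_space[OF M y_in_M]] by blast
  have "h y - ereal (\<Theta> y) \<le> h z - ereal (\<Theta> z)" if "z \<in> M \<inter> ball y r" for z
  proof -
    have "ereal (\<Theta> z) \<le> h z"
      using below[rule_format, of z] that by simp
    then show ?thesis
      using \<Theta>y[symmetric] by (cases "h z") auto
  qed
  then have "g \<in> riem_frechet_subdiff M h y"
    unfolding riem_frechet_subdiff_def mem_Collect_eq
    using y_in_M \<Theta>y \<open>r > 0\<close> C1 g D\<Theta>
    by (intro conjI exI[of _ "ball y r"] exI[of _ \<Theta>]) auto
  then show ?thesis
    using y_in_M \<open>norm g \<le> norm v\<close> by blast
qed

lemma riem_limiting_subdiff_subset_limiting_subdiff:
  assumes M: "embedded_submanifold M"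
  shows "riem_limiting_subdiff M h x \<subseteq> limiting_subdiff (plus_indicator h M) x"
proof
  fix g assume "g \<in> riem_limiting_subdiff M h x"
  then obtain xs vs where "x \<in> M" "\<bar>h x\<bar> \<noteq> \<infinity>" and xs_in_M: "\<forall>k. xs k \<in> M"
    and "xs \<longlonglongrightarrow> x" and h_xs: "(\<lambda>k. h (xs k)) \<longlonglongrightarrow> h x"
    and vs: "\<forall>k. vs k \<in> riem_frechet_subdiff M h (xs k)" and "vs \<longlonglongrightarrow> g"
    unfolding riem_limiting_subdiff_def mem_Collect_eq by (elim conjE exE) (rule that, assumption+)
  moreover have "(\<lambda>k. plus_indicator h M (xs k)) \<longlonglongrightarrow> plus_indicator h M x"
    using h_xs xs_in_M \<open>x \<in> M\<close> by simp
  moreover have "\<forall>k. vs k \<in> frechet_subdiff (plus_indicator h M) (xs k)"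
    using vs riem_frechet_subdiff_subset_frechet_subdiff[OF M] by blast
  ultimately show "g \<in> limiting_subdiff (plus_indicator h M) x"
    unfolding limiting_subdiff_def mem_Collect_eq by (metis plus_indicator_in)
qed

lemma limiting_subdiff_plus_indicator_imp_riem:
  assumes M: "embedded_submanifold M" and v: "v \<in> limiting_subdiff (plus_indicator h M) x"
  shows "x \<in> M \<and> (\<exists>g\<in>riem_limiting_subdiff M h x. norm g \<le> norm v)"
proof -
  obtain xs vs where fx: "\<bar>plus_indicator h M x\<bar> \<noteq> \<infinity>" and xs: "xs \<longlonglongrightarrow> x"
    and f_xs: "(\<lambda>k. plus_indicator h M (xs k)) \<longlonglongrightarrow> plus_indicator h M x"
    and vs: "\<forall>k. vs k \<in> frechet_subdiff (plus_indicator h M) (xs k)" and "vs \<longlonglongrightarrow> v"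
    using v unfolding limiting_subdiff_def mem_Collect_eq by (elim conjE exE) (rule that, assumption+)
  have x_in_M: "x \<in> M"
    using fx by (cases "x \<in> M") auto
  have "\<forall>k. xs k \<in> M \<and> (\<exists>g\<in>riem_frechet_subdiff M h (xs k). norm g \<le> norm (vs k))"
    using vs frechet_subdiff_plus_indicator_imp_riem[OF M] by blast
  then obtain G where xs_in_M: "\<And>k. xs k \<in> M" and G: "\<And>k. G k \<in> riem_frechet_subdiff M h (xs k)"
    and G_le: "\<And>k. norm (G k) \<le> norm (vs k)"
    by metis
  obtain B where "\<forall>k. norm (vs k) \<le> B"
    using convergent_imp_bounded[OF \<open>vs \<longlonglongrightarrow> v\<close>] unfolding bounded_iff by auto
  then have "bounded (range G)"
    unfolding bounded_iff using G_le by (intro exI[of _ B]) (auto intro: order_trans)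
  then obtain l r where r: "strict_mono r" and Gr: "(G \<circ> r) \<longlonglongrightarrow> l"
    using bounded_imp_convergent_subsequence by blast
  have "(\<lambda>k. h ((xs \<circ> r) k)) \<longlonglongrightarrow> h x"
    using LIMSEQ_subseq_LIMSEQ[OF f_xs r] xs_in_M x_in_M by (simp add: o_def)
  then have "l \<in> riem_limiting_subdiff M h x"
    unfolding riem_limiting_subdiff_def mem_Collect_eq
    using x_in_M fx xs_in_M LIMSEQ_subseq_LIMSEQ[OF xs r] G Gr
    by (intro conjI exI[of _ "xs \<circ> r"] exI[of _ "G \<circ> r"]) auto
  moreover have "norm l \<le> norm v"
  proof (rule LIMSEQ_le)
    show "(\<lambda>k. norm ((G \<circ> r) k)) \<longlonglongrightarrow> norm l"
      using Gr by (rule tendsto_norm)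
    show "(\<lambda>k. norm ((vs \<circ> r) k)) \<longlonglongrightarrow> norm v"
      using LIMSEQ_subseq_LIMSEQ[OF \<open>vs \<longlonglongrightarrow> v\<close> r] by (rule tendsto_norm)
    show "\<exists>N. \<forall>n\<ge>N. norm ((G \<circ> r) n) \<le> norm ((vs \<circ> r) n)"
      using G_le by auto
  qed
  ultimately show ?thesis
    using x_in_M by blast
qed

section \<open>Transfer of the KL property\<close>

lemma infdist_zero_le_by_norm:
  fixes A B :: "'a::real_normed_vector set"
  assumes "A \<noteq> {}" "B \<noteq> {}" "\<And>b. b \<in> B \<Longrightarrow> \<exists>a\<in>A. norm a \<le> norm b"
  shows "infdist 0 A \<le> infdist 0 B"
  unfolding infdist_notempty[OF assms(2)]
proof (rule cINF_greatest[OF assms(2)])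
  fix b assume "b \<in> B"
  then obtain a where "a \<in> A" "norm a \<le> norm b"
    using assms(3) by blast
  then show "infdist 0 A \<le> dist 0 b"
    using infdist_le[of a A 0] by simp
qed

lemma KL_at_transfer:
  assumes KL: "KL_at sd1 D1 g1 xb" and g_xb: "g2 xb = g1 xb" and not_MInf: "g1 xb \<noteq> -\<infinity>"
    and transfer: "\<And>z. z \<in> D2 \<Longrightarrow> sd2 z \<noteq> {} \<Longrightarrow>
       z \<in> D1 \<and> g2 z = g1 z \<and> sd1 z \<noteq> {} \<and> infdist 0 (sd1 z) \<le> infdist 0 (sd2 z)"
  shows "KL_at sd2 D2 g2 xb"
proof -
  obtain \<eta> U \<phi> where desingularizer: "\<eta> > 0" "open U" "xb \<in> U"
    "continuous_on {s. 0 \<le> s \<and> ereal s < \<eta>} \<phi>"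
    "concave_on {s. 0 \<le> s \<and> ereal s < \<eta>} \<phi>"
    "\<phi> 0 = 0" "\<forall>s. 0 \<le> s \<and> ereal s < \<eta> \<longrightarrow> \<phi> s \<ge> 0"
    "\<forall>s. 0 < s \<and> ereal s < \<eta> \<longrightarrow> \<phi> differentiable (at s) \<and> deriv \<phi> s > 0"
    "continuous_on {s. 0 < s \<and> ereal s < \<eta>} (deriv \<phi>)"
    and KL_ineq: "\<forall>x\<in>U \<inter> D1. g1 xb < g1 x \<and> g1 x < g1 xb + \<eta> \<longrightarrow> sd1 x \<noteq> {} \<longrightarrow>
            deriv \<phi> (real_of_ereal (g1 x - g1 xb)) * infdist 0 (sd1 x) \<ge> 1"
    using KL unfolding KL_at_def by blast
  have "deriv \<phi> (real_of_ereal (g2 x - g2 xb)) * infdist 0 (sd2 x) \<ge> 1"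
    if x: "x \<in> U \<inter> D2" "g2 xb < g2 x" "g2 x < g2 xb + \<eta>" "sd2 x \<noteq> {}" for x
  proof -
    have t: "x \<in> D1" "g2 x = g1 x" "sd1 x \<noteq> {}" "infdist 0 (sd1 x) \<le> infdist 0 (sd2 x)"
      using transfer[of x] x by auto
    have lt: "g1 xb < g1 x" "g1 x < g1 xb + \<eta>"
      using x t(2) g_xb by auto
    \<comment> \<open>\<open>g1 xb \<noteq> -\<infinity>\<close> is needed here: in \<open>ereal\<close>, \<open>-\<infinity> + \<infinity> = \<infinity>\<close>.\<close>
    then have "0 < real_of_ereal (g1 x - g1 xb) \<and> ereal (real_of_ereal (g1 x - g1 xb)) < \<eta>"
      using desingularizer(1) not_MInf by (cases "g1 x"; cases "g1 xb"; cases \<eta>) auto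
    then have "deriv \<phi> (real_of_ereal (g1 x - g1 xb)) > 0"
      using desingularizer(8) by blast
    moreover have "1 \<le> deriv \<phi> (real_of_ereal (g1 x - g1 xb)) * infdist 0 (sd1 x)"
      using KL_ineq x(1) t(1,3) lt by blast
    ultimately show ?thesis
      using t(2,4) g_xb by (simp add: order_trans[OF _ mult_left_mono])
  qed
  then show ?thesis
    unfolding KL_at_def
    by (intro exI[of _ \<eta>] exI[of _ U] exI[of _ \<phi>]) (use desingularizer in blast)
qed

lemma KL_function_transfer:
  assumes KL: "KL_function sd1 D1 g1" and proper: "proper_on D2 g2"
    and transfer: "\<And>z. z \<in> D2 \<Longrightarrow> sd2 z \<noteq> {} \<Longrightarrow>
       z \<in> D1 \<and> g2 z = g1 z \<and> sd1 z \<noteq> {} \<and> infdist 0 (sd1 z) \<le> infdist 0 (sd2 z)"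
  shows "KL_function sd2 D2 g2"
proof -
  have "KL_at sd2 D2 g2 x" if "x \<in> D2" "sd2 x \<noteq> {}" for x
  proof (rule KL_at_transfer[OF _ _ _ transfer])
    have "x \<in> D1" "sd1 x \<noteq> {}" "g2 x = g1 x"
      using transfer that by auto
    then show "KL_at sd1 D1 g1 x" "g2 x = g1 x" "g1 x \<noteq> -\<infinity>"
      using KL by (auto simp: KL_function_def proper_on_def)
  qed
  then show ?thesis
    using proper by (simp add: KL_function_def)
qed

lemma proper_on_plus_indicator_iff: "proper_on UNIV (plus_indicator h M) \<longleftrightarrow> proper_on M h"
  unfolding proper_on_def plus_indicator_def by auto

lemma KL_function_M_if_KL_function_E:
  assumes M: "embedded_submanifold M" and KL: "KL_function_E (plus_indicator h M)"
  shows "KL_function_M M h"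
proof (rule KL_function_transfer[OF KL])
  show "proper_on M h"
    using KL proper_on_plus_indicator_iff by (auto simp: KL_function_def)
  fix z assume "z \<in> M" "riem_limiting_subdiff M h z \<noteq> {}"
  with riem_limiting_subdiff_subset_limiting_subdiff[OF M, of h z]
  show "z \<in> UNIV \<and> h z = plus_indicator h M z \<and> limiting_subdiff (plus_indicator h M) z \<noteq> {}
      \<and> infdist 0 (limiting_subdiff (plus_indicator h M) z) \<le> infdist 0 (riem_limiting_subdiff M h z)"
    by (auto intro!: infdist_zero_le_by_norm)
qed

lemma KL_function_E_if_KL_function_M:
  assumes M: "embedded_submanifold M" and KL: "KL_function_M M h"
  shows "KL_function_E (plus_indicator h M)"
proof (rule KL_function_transfer[OF KL])
  show "proper_on UNIV (plus_indicator h M)"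
    using KL proper_on_plus_indicator_iff by (auto simp: KL_function_def)
  fix z assume "limiting_subdiff (plus_indicator h M) z \<noteq> {}"
  with limiting_subdiff_plus_indicator_imp_riem[OF M, of _ h z]
  show "z \<in> M \<and> plus_indicator h M z = h z \<and> riem_limiting_subdiff M h z \<noteq> {}
      \<and> infdist 0 (riem_limiting_subdiff M h z) \<le> infdist 0 (limiting_subdiff (plus_indicator h M) z)"
    by (auto intro!: infdist_zero_le_by_norm)
qed

theorem lemma2p10:
  fixes h :: "'a::euclidean_space \<Rightarrow> ereal" and M :: "'a set"
  assumes "proper_on UNIV h"
    and "compact M" and "embedded_submanifold M"
  shows "(KL_function_E (plus_indicator h M) \<longrightarrow> KL_function_M M h)
       \<and> (KL_function_M M h \<longrightarrow> KL_function_E (plus_indicator h M))"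
  using KL_function_M_if_KL_function_E[OF \<open>embedded_submanifold M\<close>]
    KL_function_E_if_KL_function_M[OF \<open>embedded_submanifold M\<close>]
  by blast

end
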